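(* Let $m\ge3$ be an integer, $\beta=\frac{m+\sqrt{m^2-4}}{2}$, and let $\mathbf U=(U_k)$ be given by $U_{-1}=0$, $U_0=1$, $U_{k+1}=mU_k-U_{k-1}$ for $k\in\mathbb N$. Let $n\in\mathbb N$ have $\mathbf U$-expansion $(n)_{\mathbf U}=a_Na_{N-1}\cdots a_1a_0$. Then the $\mathbf U$-expansion of $\lfloor n/\beta\rfloor$ is $a_Na_{N-1}\cdots a_1$ (with leading zeros removed; empty word meaning $0$), and the $\beta$-expansion of the fractional part $\{n/\beta\}$ is $$d_\beta(\{n/\beta\})=a_0a_1\cdots a_{N-1}a_N0^\omega.$$
   Context: $\mathbf U$-expansion: for $n\ge1$, $(n)_{\mathbf U}=a_N\cdots a_0$ is the unique string of non-negative integers with $a_N\ne0$, $n=\sum_{k=0}^N a_kU_k$ and $\sum_{k=0}^i a_kU_k<U_{i+1}$ for all $i\le N$ (the greedy representation); equivalently, a string over $\{0,\dots,m-1\}$ with nonzero leading digit not containing any factor $(m-1)(m-2)^{j}(m-1)$, $j\ge0$. The expansion of $0$ is the empty word. $\beta$-expansion: for $x\in[0,1)$, with $T_\beta(x)=\beta x-\lfloor\beta x\rfloor$, $d_\beta(x)=(x_i)_{i\ge1}$ where $x_i=\lfloor\beta T_\beta^{i-1}(x)\rfloor$, so that $x=\sum_{i\ge1}x_i\beta^{-i}$. *)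

theory Defs
  imports Complex_Main
begin

text \<open>The sequence U: U_{-1} = 0, U_0 = 1, U_{k+1} = m U_k - U_{k-1}.
  We index from 0, so Useq m 1 = m * 1 - 0 = m. Values are integers.\<close>
fun Useq :: "nat \<Rightarrow> nat \<Rightarrow> int" where
  "Useq m 0 = 1"
| "Useq m (Suc 0) = int m"
| "Useq m (Suc (Suc k)) = int m * Useq m (Suc k) - Useq m k"

text \<open>Digit strings are stored little-endian: ds = [a_0, a_1, ..., a_N].
  ds is the (greedy) U-expansion of n iff its leading digit a_N is nonzero,
  n = sum a_k U_k, and sum_{k<=i} a_k U_k < U_{i+1} for all i <= N.\<close>
definition is_U_expansion :: "nat \<Rightarrow> nat \<Rightarrow> nat list \<Rightarrow> bool" where
  "is_U_expansion m n ds \<longleftrightarrow>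
     (ds \<noteq> [] \<longrightarrow> last ds \<noteq> 0) \<and>
     int n = (\<Sum>k<length ds. int (ds ! k) * Useq m k) \<and>
     (\<forall>i<length ds. (\<Sum>k\<le>i. int (ds ! k) * Useq m k) < Useq m (Suc i))"

definition U_expansion :: "nat \<Rightarrow> nat \<Rightarrow> nat list" where
  "U_expansion m n = (THE ds. is_U_expansion m n ds)"

text \<open>beta-transformation and beta-expansion; digits indexed from 1.\<close>
definition T_beta :: "real \<Rightarrow> real \<Rightarrow> real" where
  "T_beta \<beta> x = \<beta> * x - of_int \<lfloor>\<beta> * x\<rfloor>"

definition d_beta :: "real \<Rightarrow> real \<Rightarrow> nat \<Rightarrow> int" where
  "d_beta \<beta> x i = \<lfloor>\<beta> * (T_beta \<beta> ^^ (i - 1)) x\<rfloor>"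

end

theory Submission
  imports Defs
begin

text \<open>
  The larger root \<open>\<beta>\<close> of \<open>x\<^sup>2 - m x + 1\<close> satisfies \<open>U(k+1) = \<beta> U(k) + \<beta>^-(k+1)\<close>.
  Dividing \<open>n = \<Sum> a(k) U(k)\<close> by \<open>\<beta>\<close> therefore gives
  \<open>n / \<beta> = \<Sum>(k \<ge> 1) a(k) U(k-1) + \<Sum> a(k) \<beta>^-(k+1)\<close>: an integer whose digits
  \<open>a(N) \<dots> a(1)\<close> are again greedy, plus the number with \<beta>-digits \<open>a(0) a(1) \<dots> a(N)\<close>.
  The greedy condition on prefixes bounds the \<beta>-value of a greedy word of length \<open>L\<close>
  by that of \<open>(m-1)(m-2)^(L-1)\<close>, which is below 1. Hence the two summands are the
  integer and the fractional part of \<open>n / \<beta>\<close>, and the \<beta>-transformation acts on the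
  fractional part as the shift of its digit word.
\<close>

definition U_value :: "nat \<Rightarrow> nat list \<Rightarrow> int" where
  "U_value m ds = (\<Sum>k<length ds. int (ds ! k) * Useq m k)"

definition U_greedy :: "nat \<Rightarrow> nat list \<Rightarrow> bool" where
  "U_greedy m ds \<longleftrightarrow> (\<forall>i<length ds. U_value m (take (Suc i) ds) < Useq m (Suc i))"

lemma U_value_take_Suc:
  assumes "i < length ds"
  shows "U_value m (take (Suc i) ds) = (\<Sum>k\<le>i. int (ds ! k) * Useq m k)"
proof -
  have "length (take (Suc i) ds) = Suc i" using assms by simp
  then show ?thesis
    unfolding U_value_def lessThan_Suc_atMost by (intro sum.cong) auto
qed

lemma is_U_expansion_iff:
  "is_U_expansion m n ds \<longleftrightarrow>
     (ds \<noteq> [] \<longrightarrow> last ds \<noteq> 0) \<and> int n = U_value m ds \<and> U_greedy m ds"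
  unfolding is_U_expansion_def U_greedy_def U_value_def[of m ds] by (simp add: U_value_take_Suc)

lemma Useq_pos_strict_mono:
  assumes "m \<ge> 2"
  shows "1 \<le> Useq m k \<and> Useq m k < Useq m (Suc k)"
proof (induction k)
  case 0
  then show ?case using assms by simp
next
  case (Suc k)
  have "2 * Useq m (Suc k) \<le> int m * Useq m (Suc k)"
    using assms Suc by (intro mult_right_mono) auto
  moreover have "Useq m (Suc (Suc k)) = int m * Useq m (Suc k) - Useq m k" by simp
  ultimately show ?case using Suc by linarith
qed

lemma Useq_pos: "m \<ge> 2 \<Longrightarrow> 0 < Useq m k"
  using Useq_pos_strict_mono[of m k] by simp

lemma strict_mono_Useq: "m \<ge> 2 \<Longrightarrow> strict_mono (Useq m)"
  using Useq_pos_strict_mono by (simp add: strict_mono_Suc_iff)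

lemma Useq_gt_index: "m \<ge> 2 \<Longrightarrow> int k < Useq m k"
proof (induction k)
  case (Suc k)
  then show ?case using Useq_pos_strict_mono[of m k] by simp
qed simp

lemma U_value_snoc: "U_value m (xs @ [x]) = U_value m xs + int x * Useq m (length xs)"
  unfolding U_value_def by (simp add: nth_append)

lemma U_value_nonneg: "m \<ge> 2 \<Longrightarrow> 0 \<le> U_value m ds"
  unfolding U_value_def using Useq_pos by (intro sum_nonneg) (simp add: less_imp_le)

lemma U_greedy_snoc:
  "U_greedy m (xs @ [x]) \<longleftrightarrow> U_greedy m xs \<and> U_value m (xs @ [x]) < Useq m (Suc (length xs))"
  unfolding U_greedy_def by (auto simp: less_Suc_eq)

lemma U_greedy_value_less: "U_greedy m ds \<Longrightarrow> U_value m ds < Useq m (length ds)"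
  by (induction ds rule: rev_induct) (auto simp: U_greedy_snoc U_value_def)

lemma U_value_ge_Useq_last:
  assumes "m \<ge> 2" and "ds \<noteq> []" and "last ds \<noteq> 0"
  shows "Useq m (length ds - 1) \<le> U_value m ds"
proof -
  obtain xs x where ds: "ds = xs @ [x]" and "x \<noteq> 0"
    using assms(2,3) by (cases ds rule: rev_cases) auto
  then have "Useq m (length xs) \<le> int x * Useq m (length xs)"
    using Useq_pos[OF assms(1)] by simp
  then show ?thesis using U_value_nonneg[OF assms(1), of xs] by (simp add: ds U_value_snoc)
qed

lemma U_greedy_eqI:
  assumes "m \<ge> 2"
  shows "U_greedy m xs \<Longrightarrow> U_greedy m ys \<Longrightarrow> length xs = length ys \<Longrightarrow>
    U_value m xs = U_value m ys \<Longrightarrow> xs = ys"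
proof (induction xs arbitrary: ys rule: rev_induct)
  case (snoc x xs)
  obtain ys' y where ys: "ys = ys' @ [y]" and len: "length ys' = length xs"
    using snoc.prems(3) by (cases ys rule: rev_cases) auto
  define u where "u = Useq m (length xs)"
  have greedy: "U_greedy m xs" "U_greedy m ys'"
    using snoc.prems(1,2) ys by (auto simp: U_greedy_snoc)
  have "0 < u" using Useq_pos[OF assms] by (simp add: u_def)
  moreover have "0 \<le> U_value m xs" "U_value m xs < u" "0 \<le> U_value m ys'" "U_value m ys' < u"
    using U_greedy_value_less[OF greedy(1)] U_greedy_value_less[OF greedy(2)]
      U_value_nonneg[OF assms] len by (auto simp: u_def)
  ultimately have "(U_value m xs + int x * u) div u = int x"
    "(U_value m ys' + int y * u) div u = int y" by simp_all
  moreover have sum_eq: "U_value m xs + int x * u = U_value m ys' + int y * u"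
    using snoc.prems(4) ys len by (simp add: U_value_snoc u_def)
  ultimately have "x = y" by simp
  then have "xs = ys'" using sum_eq snoc.IH greedy len by simp
  then show ?case using \<open>x = y\<close> ys by simp
qed simp

lemma is_U_expansion_length_eq:
  assumes "m \<ge> 2" and "is_U_expansion m n xs" and "is_U_expansion m n ys"
  shows "length xs = length ys"
proof -
  have shorter: False if "is_U_expansion m n xs" "is_U_expansion m n ys" "length xs < length ys"
    for xs ys
  proof -
    have "ys \<noteq> []" "last ys \<noteq> 0" "int n = U_value m ys"
      using that(2,3) by (auto simp: is_U_expansion_iff)
    have "int n < Useq m (length xs)"
      using U_greedy_value_less[of m xs] that(1) by (simp add: is_U_expansion_iff)
    also have "\<dots> \<le> Useq m (length ys - 1)"
      using strict_mono_less_eq[OF strict_mono_Useq[OF assms(1)]] that(3) by simp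
    also have "\<dots> \<le> int n"
      using U_value_ge_Useq_last[OF assms(1)] \<open>ys \<noteq> []\<close> \<open>last ys \<noteq> 0\<close> \<open>int n = U_value m ys\<close>
      by simp
    finally show False by simp
  qed
  show ?thesis using shorter[OF assms(2,3)] shorter[OF assms(3,2)] by (meson linorder_neqE_nat)
qed

lemma is_U_expansion_unique:
  assumes "m \<ge> 2" and "is_U_expansion m n xs" and "is_U_expansion m n ys"
  shows "xs = ys"
  using U_greedy_eqI[OF assms(1)] is_U_expansion_length_eq[OF assms] assms(2,3)
  by (auto simp: is_U_expansion_iff)

lemma U_greedy_exists:
  assumes "m \<ge> 2"
  shows "0 \<le> v \<Longrightarrow> v < Useq m L \<Longrightarrow> \<exists>ds. length ds = L \<and> U_greedy m ds \<and> U_value m ds = v"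
proof (induction L arbitrary: v)
  case 0
  then show ?case by (auto simp: U_greedy_def U_value_def)
next
  case (Suc L)
  define u where "u = Useq m L"
  have "0 < u" using Useq_pos[OF assms] by (simp add: u_def)
  then obtain ds where ds: "length ds = L" "U_greedy m ds" "U_value m ds = v mod u"
    using Suc.IH[of "v mod u"] by (auto simp: u_def)
  have "0 \<le> v div u" using Suc.prems \<open>0 < u\<close> by (simp add: pos_imp_zdiv_nonneg_iff)
  then have "U_value m (ds @ [nat (v div u)]) = v"
    using ds by (simp add: U_value_snoc u_def mult.commute)
  then show ?case using ds Suc.prems
    by (intro exI[of _ "ds @ [nat (v div u)]"]) (simp add: U_greedy_snoc)
qed

lemma U_greedy_drop_trailing_zeros:
  "U_greedy m ds \<Longrightarrow>
    \<exists>ds'. U_greedy m ds' \<and> U_value m ds' = U_value m ds \<and> (ds' \<noteq> [] \<longrightarrow> last ds' \<noteq> 0)"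
proof (induction ds rule: rev_induct)
  case (snoc x xs)
  then show ?case
    by (cases "x = 0") (auto simp: U_greedy_snoc U_value_snoc intro: exI[of _ "xs @ [x]"])
qed auto

lemma is_U_expansion_exists:
  assumes "m \<ge> 2"
  shows "\<exists>ds. is_U_expansion m n ds"
proof -
  obtain ds where "U_greedy m ds" "U_value m ds = int n"
    using U_greedy_exists[OF assms, of "int n" n] Useq_gt_index[OF assms] by auto
  then show ?thesis
    using U_greedy_drop_trailing_zeros by (fastforce simp: is_U_expansion_iff)
qed

lemma U_expansion_eqI:
  "m \<ge> 2 \<Longrightarrow> is_U_expansion m n ds \<Longrightarrow> U_expansion m n = ds"
  unfolding U_expansion_def using is_U_expansion_unique by blast

lemma is_U_expansion_U_expansion: "m \<ge> 2 \<Longrightarrow> is_U_expansion m n (U_expansion m n)"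
  using is_U_expansion_exists U_expansion_eqI by metis

definition beta_value :: "real \<Rightarrow> nat list \<Rightarrow> real" where
  "beta_value \<beta> ds = (\<Sum>k<length ds. real (ds ! k) / \<beta> ^ Suc k)"

lemma beta_value_Nil [simp]: "beta_value \<beta> [] = 0"
  by (simp add: beta_value_def)

lemma beta_value_Cons: "beta_value \<beta> (a # ds) = (real a + beta_value \<beta> ds) / \<beta>"
  unfolding beta_value_def length_Cons sum.lessThan_Suc_shift
  by (simp add: sum_divide_distrib add_divide_distrib mult.commute)

lemma beta_value_snoc:
  "beta_value \<beta> (ds @ [a]) = beta_value \<beta> ds + real a / \<beta> ^ Suc (length ds)"
  unfolding beta_value_def by (simp add: nth_append)

lemma beta_value_nonneg: "0 \<le> \<beta> \<Longrightarrow> 0 \<le> beta_value \<beta> ds"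
  unfolding beta_value_def by (intro sum_nonneg) simp

lemma
  assumes "0 < \<beta>" and "beta_value \<beta> ds < 1"
  shows floor_times_beta_value_Cons: "\<lfloor>\<beta> * beta_value \<beta> (a # ds)\<rfloor> = int a"
    and T_beta_beta_value_Cons: "T_beta \<beta> (beta_value \<beta> (a # ds)) = beta_value \<beta> ds"
proof -
  have times: "\<beta> * beta_value \<beta> (a # ds) = real a + beta_value \<beta> ds"
    using assms(1) by (simp add: beta_value_Cons)
  show digit: "\<lfloor>\<beta> * beta_value \<beta> (a # ds)\<rfloor> = int a"
    unfolding times using assms beta_value_nonneg[of \<beta> ds] by (intro floor_unique) auto
  show "T_beta \<beta> (beta_value \<beta> (a # ds)) = beta_value \<beta> ds"
    unfolding T_beta_def digit unfolding times by simp
qed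

lemma funpow_T_beta_beta_value:
  assumes "0 < \<beta>" and "\<And>j. beta_value \<beta> (drop j ds) < 1"
  shows "(T_beta \<beta> ^^ j) (beta_value \<beta> ds) = beta_value \<beta> (drop j ds)"
proof (induction j)
  case (Suc j)
  show ?case
  proof (cases "j < length ds")
    case True
    then have "drop j ds = ds ! j # drop (Suc j) ds" by (rule Cons_nth_drop_Suc[symmetric])
    then show ?thesis
      using Suc T_beta_beta_value_Cons[OF assms(1) assms(2)[of "Suc j"]] by simp
  next
    case False
    then show ?thesis using Suc by (simp add: T_beta_def)
  qed
qed simp

lemma d_beta_beta_value:
  assumes "0 < \<beta>" and "\<And>j. beta_value \<beta> (drop j ds) < 1" and "1 \<le> i"
  shows "d_beta \<beta> (beta_value \<beta> ds) i = (if i \<le> length ds then int (ds ! (i - 1)) else 0)"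
proof (cases "i \<le> length ds")
  case True
  then have "drop (i - 1) ds = ds ! (i - 1) # drop i ds"
    using assms(3) Cons_nth_drop_Suc[of "i - 1" ds] by simp
  then show ?thesis
    using True floor_times_beta_value_Cons[OF assms(1) assms(2)[of i]]
    by (simp add: d_beta_def funpow_T_beta_beta_value[OF assms(1,2)])
qed (use assms in \<open>simp add: d_beta_def funpow_T_beta_beta_value\<close>)

lemma digit_bound:
  fixes q k u v w :: int
  assumes "0 < u" "0 \<le> v" "0 \<le> w" and lt: "v + q * u + w < k * u"
  shows "q < k" and "q + 1 = k \<Longrightarrow> v + w < u"
proof -
  show "q < k"
  proof (rule ccontr)
    assume "\<not> q < k"
    then have "k * u \<le> q * u" using assms(1) by (intro mult_right_mono) auto
    then show False using assms by linarith
  qed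
  show "v + w < u" if "q + 1 = k"
    using lt unfolding that[symmetric] by (simp add: algebra_simps)
qed

lemma U_value_snoc_less_imp:
  assumes "m \<ge> 2" and "xs \<noteq> []"
    and less: "U_value m (xs @ [q]) + int j * Useq m (length xs) < Useq m (Suc (length xs))"
  shows "q + j < m"
    and "q + j + 1 = m \<Longrightarrow> U_value m xs + Useq m (length xs - 1) < Useq m (length xs)"
proof -
  obtain L where L: "length xs = Suc L" using assms(2) by (cases xs) auto
  have "0 < Useq m (Suc L)" "0 \<le> U_value m xs" "0 \<le> Useq m L"
    using Useq_pos U_value_nonneg assms(1) by (auto simp: less_imp_le)
  moreover have "U_value m xs + int (q + j) * Useq m (Suc L) + Useq m L < int m * Useq m (Suc L)"
    using less by (simp add: U_value_snoc L algebra_simps)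
  ultimately show "q + j < m" and "q + j + 1 = m \<Longrightarrow>
      U_value m xs + Useq m (length xs - 1) < Useq m (length xs)"
    using digit_bound[of "Useq m (Suc L)" "U_value m xs" "Useq m L" "int (q + j)" "int m"]
    by (auto simp: L)
qed

locale U_beta_numeration =
  fixes m :: nat and \<beta> :: real
  assumes beta_quadratic: "\<beta> * \<beta> = real m * \<beta> - 1"
    and beta_gt_1: "1 < \<beta>"
begin

lemma beta_pos: "0 < \<beta>"
  using beta_gt_1 by simp

lemma m_eq_beta_plus_inverse: "real m = \<beta> + 1 / \<beta>"
  using beta_quadratic beta_pos by (simp add: field_simps)

lemma m_ge_3: "m \<ge> 3"
proof -
  have "0 < (\<beta> - 1) * (\<beta> - 1)"
    using beta_gt_1 by simp
  then have "2 * \<beta> < \<beta> * \<beta> + 1" by (simp add: algebra_simps)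
  then have "2 < real m" using beta_quadratic beta_pos by (simp add: algebra_simps)
  then show ?thesis by simp
qed

lemma m_ge_2: "m \<ge> 2"
  using m_ge_3 by simp

lemma Useq_Suc_eq: "real_of_int (Useq m (Suc k)) = \<beta> * real_of_int (Useq m k) + 1 / \<beta> ^ Suc k"
proof (induction k rule: less_induct)
  case (less k)
  show ?case
  proof (cases k)
    case 0
    then show ?thesis using m_eq_beta_plus_inverse by simp
  next
    case (Suc j)
    have "real_of_int (Useq m (Suc (Suc j))) = (\<beta> + 1 / \<beta>) * Useq m (Suc j) - Useq m j"
      using m_eq_beta_plus_inverse by simp
    also have "\<dots> = \<beta> * Useq m (Suc j) + 1 / \<beta> ^ Suc (Suc j)"
      using less[of j] beta_pos Suc by (simp add: field_simps)
    finally show ?thesis using Suc by simp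
  qed
qed

lemma U_value_Cons_div_beta:
  "real_of_int (U_value m (a # ds)) / \<beta> = real_of_int (U_value m ds) + beta_value \<beta> (a # ds)"
proof -
  have "real_of_int (U_value m (a # ds))
      = real a + (\<Sum>k<length ds. real (ds ! k) * real_of_int (Useq m (Suc k)))"
    unfolding U_value_def length_Cons sum.lessThan_Suc_shift by simp
  also have "\<dots> = real a + \<beta> * real_of_int (U_value m ds) + beta_value \<beta> ds"
    unfolding Useq_Suc_eq U_value_def beta_value_def
    by (simp add: algebra_simps sum.distrib sum_distrib_left)
  finally show ?thesis
    using beta_pos by (simp add: beta_value_Cons field_simps)
qed

lemma U_greedy_Cons_imp: "U_greedy m (a # ds) \<Longrightarrow> U_greedy m ds"
  unfolding U_greedy_def
proof (intro allI impI)
  fix i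
  assume greedy: "\<forall>i<length (a # ds). U_value m (take (Suc i) (a # ds)) < Useq m (Suc i)"
    and i: "i < length ds"
  define t where "t = take (Suc i) ds"
  have "U_value m (a # t) < Useq m (Suc (Suc i))"
    using greedy i unfolding t_def by fastforce
  then have "real_of_int (U_value m (a # t)) \<le> \<beta> * Useq m (Suc i) + 1 / \<beta> ^ Suc (Suc i) - 1"
    using Useq_Suc_eq[of "Suc i"] by linarith
  also have "\<dots> < \<beta> * Useq m (Suc i)"
    using one_less_power[OF beta_gt_1, of "Suc (Suc i)"] by simp
  finally have "real_of_int (U_value m (a # t)) / \<beta> < Useq m (Suc i)"
    using beta_pos by (simp add: field_simps)
  then have "real_of_int (U_value m t) < Useq m (Suc i)"
    unfolding U_value_Cons_div_beta using beta_value_nonneg[of \<beta> "a # t"] beta_pos by linarith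
  then show "U_value m (take (Suc i) ds) < Useq m (Suc i)"
    unfolding t_def by linarith
qed

lemma U_greedy_drop: "U_greedy m ds \<Longrightarrow> U_greedy m (drop j ds)"
proof (induction j arbitrary: ds)
  case (Suc j)
  then show ?case
    by (cases ds) (auto dest: U_greedy_Cons_imp)
qed simp

text \<open>
  The two bounds are the \<beta>-values of \<open>(m-1)(m-2)^(L-1)\<close> and \<open>(m-1)(m-2)^(L-2)(m-3)\<close>;
  the sharper one is needed in the induction when the next digit is \<open>m - 1\<close>.
\<close>

lemma beta_value_U_greedy_le:
  assumes "ds \<noteq> []" and "U_greedy m ds"
  shows "beta_value \<beta> ds \<le> 1 - 1 / \<beta> ^ length ds + 1 / \<beta> ^ Suc (length ds)
    \<and> (U_value m ds + Useq m (length ds - 1) < Useq m (length ds) \<longrightarrow>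
        beta_value \<beta> ds \<le> 1 - 2 / \<beta> ^ length ds + 1 / \<beta> ^ Suc (length ds))"
  using assms
proof (induction ds rule: rev_nonempty_induct)
  case (single q)
  define b where "b = 1 / \<beta>"
  have mb: "real m * b = 1 + b * b"
    using m_eq_beta_plus_inverse beta_pos by (simp add: b_def field_simps)
  have "q < m" using single U_greedy_snoc[of m "[]" q] by (simp add: U_value_def)
  then have "real q * b + b \<le> real m * b" using beta_pos
    by (simp add: b_def divide_right_mono flip: add_divide_distrib)
  moreover have "real q * b + 2 * b \<le> real m * b" if "q + 1 < m"
    using that beta_pos by (simp add: b_def divide_right_mono flip: add_divide_distrib)
  ultimately show ?case
    using mb by (simp add: beta_value_def U_value_def b_def power2_eq_square field_simps)
next
  case (snoc q xs)
  define L where "L = length xs"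
  define a b c where "a = 1 / \<beta> ^ L" and "b = 1 / \<beta> ^ Suc L" and "c = 1 / \<beta> ^ Suc (Suc L)"
  have mb: "real m * b = a + c"
    using m_eq_beta_plus_inverse beta_pos by (simp add: a_def b_def c_def field_simps)
  have "b \<le> a" using beta_gt_1 by (simp add: a_def b_def field_simps)
  have beta_val: "beta_value \<beta> (xs @ [q]) = beta_value \<beta> xs + real q * b"
    by (simp add: beta_value_snoc b_def L_def)
  have "U_greedy m xs" and greedy: "U_value m (xs @ [q]) + int 0 * Useq m L < Useq m (Suc L)"
    using snoc.prems by (simp_all add: U_greedy_snoc L_def)
  then have IH: "beta_value \<beta> xs \<le> 1 - a + b"
    "U_value m xs + Useq m (L - 1) < Useq m L \<Longrightarrow> beta_value \<beta> xs \<le> 1 - 2 * a + b"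
    using snoc.IH by (auto simp: a_def b_def L_def)
  note last_digit = U_value_snoc_less_imp[OF m_ge_2 snoc.hyps, folded L_def]
  have scale: "real q * b + real k * b \<le> real m * b" if "q + k \<le> m" for k
    using that beta_pos by (simp add: b_def divide_right_mono flip: add_divide_distrib)
  have scale_eq: "real q * b + real k * b = real m * b" if "q + k = m" for k
    using that by (simp flip: distrib_right)
  have "beta_value \<beta> (xs @ [q]) \<le> 1 - b + c"
  proof (cases "q + 1 = m")
    case True
    then show ?thesis
      using last_digit(2)[OF greedy] IH(2) scale_eq[OF True] mb \<open>b \<le> a\<close> beta_val by simp
  next
    case False
    then have "q + 2 \<le> m" using last_digit(1)[OF greedy] by simp
    then show ?thesis using IH(1) scale[of 2] mb beta_val by simp
  qed
  moreover have "beta_value \<beta> (xs @ [q]) \<le> 1 - 2 * b + c"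
    if tight: "U_value m (xs @ [q]) + int 1 * Useq m L < Useq m (Suc L)"
  proof (cases "q + 2 = m")
    case True
    then show ?thesis
      using last_digit(2)[OF tight] IH(2) scale_eq[OF True] mb \<open>b \<le> a\<close> beta_val by simp
  next
    case False
    then have "q + 3 \<le> m" using last_digit(1)[OF tight] by simp
    then show ?thesis using IH(1) scale[of 3] mb beta_val by simp
  qed
  ultimately show ?case by (simp add: L_def b_def c_def mult_2_right)
qed

lemma beta_value_U_greedy_less_1:
  assumes "U_greedy m ds"
  shows "beta_value \<beta> ds < 1"
proof (cases "ds = []")
  case False
  have "1 / \<beta> ^ Suc (length ds) < 1 / \<beta> ^ length ds"
    using beta_gt_1 by (simp add: field_simps)
  then show ?thesis using beta_value_U_greedy_le[OF False assms] by linarith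
qed simp

lemma real_div_beta_eq:
  assumes "is_U_expansion m n ds"
  shows "real n / \<beta> = real_of_int (U_value m (tl ds)) + beta_value \<beta> ds"
proof (cases ds)
  case Nil
  then show ?thesis using assms by (simp add: is_U_expansion_iff U_value_def)
next
  case (Cons a r)
  have "int n = U_value m ds" using assms by (simp add: is_U_expansion_iff)
  then have "real n = real_of_int (U_value m ds)" by (metis of_int_of_nat_eq)
  then show ?thesis using U_value_Cons_div_beta Cons by simp
qed

lemma floor_real_div_beta:
  assumes "is_U_expansion m n ds"
  shows "\<lfloor>real n / \<beta>\<rfloor> = U_value m (tl ds)"
  unfolding real_div_beta_eq[OF assms]
  using beta_value_nonneg[of \<beta> ds] beta_pos beta_value_U_greedy_less_1 assms
  by (intro floor_unique) (auto simp: is_U_expansion_iff)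

theorem U_expansion_floor_div_beta:
  "U_expansion m (nat \<lfloor>real n / \<beta>\<rfloor>) = tl (U_expansion m n)"
proof -
  define ds where "ds = U_expansion m n"
  have ds: "is_U_expansion m n ds"
    unfolding ds_def using is_U_expansion_U_expansion m_ge_2 .
  have "int (nat \<lfloor>real n / \<beta>\<rfloor>) = U_value m (tl ds)"
    using floor_real_div_beta[OF ds] U_value_nonneg[OF m_ge_2] by simp
  moreover have "U_greedy m (tl ds)"
    using ds U_greedy_drop[of ds 1] by (simp add: is_U_expansion_iff drop_Suc)
  moreover have "tl ds \<noteq> [] \<longrightarrow> last (tl ds) \<noteq> 0"
    using ds by (auto simp: is_U_expansion_iff last_tl)
  ultimately have "is_U_expansion m (nat \<lfloor>real n / \<beta>\<rfloor>) (tl ds)"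
    by (simp add: is_U_expansion_iff)
  then show ?thesis unfolding ds_def using U_expansion_eqI m_ge_2 by blast
qed

theorem frac_div_beta: "frac (real n / \<beta>) = beta_value \<beta> (U_expansion m n)"
proof -
  have ds: "is_U_expansion m n (U_expansion m n)"
    using is_U_expansion_U_expansion m_ge_2 .
  show ?thesis
    unfolding frac_def floor_real_div_beta[OF ds] unfolding real_div_beta_eq[OF ds] by simp
qed

lemma beta_value_drop_U_expansion_less_1: "beta_value \<beta> (drop j (U_expansion m n)) < 1"
  using is_U_expansion_U_expansion[OF m_ge_2]
  by (intro beta_value_U_greedy_less_1 U_greedy_drop) (simp add: is_U_expansion_iff)

end

theorem proposition3:
  fixes m n :: nat and \<beta> :: real
  assumes "m \<ge> 3"
    and "\<beta> = (real m + sqrt (real m ^ 2 - 4)) / 2"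
  shows "U_expansion m (nat \<lfloor>real n / \<beta>\<rfloor>) = tl (U_expansion m n)
       \<and> (\<forall>i\<ge>1. d_beta \<beta> (frac (real n / \<beta>)) i =
             (if i \<le> length (U_expansion m n)
              then int (U_expansion m n ! (i - 1)) else 0))"
proof -
  define s where "s = sqrt (real m ^ 2 - 4)"
  have "real m ^ 2 - 4 \<ge> 0"
    using assms(1) power_mono[of 3 "real m" 2] by simp
  then have s_square: "s * s = real m ^ 2 - 4" and "0 \<le> s"
    by (simp_all add: s_def)
  have beta: "\<beta> = (real m + s) / 2"
    using assms(2) by (simp add: s_def)
  have "\<beta> * \<beta> = real m * \<beta> - 1"
    unfolding beta using s_square by (simp add: power2_eq_square algebra_simps divide_simps)
  moreover have "1 < \<beta>"
    unfolding beta using assms(1) \<open>0 \<le> s\<close> by simp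
  ultimately interpret U_beta_numeration m \<beta>
    by unfold_locales
  show ?thesis
    using U_expansion_floor_div_beta frac_div_beta
      d_beta_beta_value[OF beta_pos beta_value_drop_U_expansion_less_1] by simp
qed

end
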